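(* Let $\mathfrak{G}$ be a non-redundant assembly graph and $\mathfrak{C}=\mathrm{CPC}(\mathfrak{G})$. Then the following finite strings are conductors for $\mathfrak{C}$: (i) any superstring of a conductor for $\mathfrak{C}$; (ii) any vertex, edge, or walk label in $\mathfrak{G}$; (iii) any string that is not a substring of $\mathfrak{C}$; (iv) any string that is at least as long as the longest edge label in $\mathfrak{G}$.
   Context: All strings are over a fixed finite alphabet $\Sigma$. A cyclic string is a bi-infinite periodic word $\mathbb{Z}\to\Sigma$, considered up to shifting indices; for a nonempty finite string $x$, $\langle x\rangle$ is the cyclic string repeating $x$ in both directions. A chromosome-set is a set of cyclic strings; a finite string is a substring of a chromosome-set if it is a contiguous block of one of its elements. A string $u$ is a proper infix of $w$ if $w=aub$ with $a,b$ nonempty. An abstract assembly graph is a finite directed multigraph in which each vertex and edge carries a label (a finite or cyclic string) such that for every edge $e$ from $u$ to $v$, $Label(u)$ is a prefix and $Label(v)$ a suffix of $Label(e)$. An edge $e$ from $u$ to $v$ is a prefix edge if $Label(e)=Label(v)$, a suffix edge if $Label(e)=Label(u)$. An assembly graph is an abstract assembly graph in which every vertex and edge lies on a directed cycle and no edge is both a prefix and a suffix edge. The label of a walk $v_0,e_1,\dots,e_n,v_n$ is $Label(e_1)$ followed, for $i\ge 2$, by $Label(e_i)$ with its first $|Label(v_{i-1})|$ characters removed; a walk with no edges has its vertex label. A circuit is a primitive closed walk up to rotation; if its walk label is $Label(v_0)x$, its label is $\langle x\rangle$. $\mathrm{CPC}(\mathfrak{G})$ is the set of circuit labels of $\mathfrak{G}$.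 $P$ is an inner subwalk of $Q$ if $Q=APB$ with walks $A,B$ each having at least one edge. The graph is non-redundant if whenever $Label(P)$ is a proper infix of $Label(Q)$ for walks $P,Q$, $P$ is an inner subwalk of $Q$. A finite string $v$ is a conductor for a chromosome-set $\mathfrak{C}$ if for all nonempty finite strings $a,b$ such that $va$ and $vb$ both end with $v$ (i.e. $va=a'v$, $vb=b'v$ for some $a',b'$), we have $\langle ab\rangle\in\mathfrak{C}$ if and only if $\langle a\rangle\in\mathfrak{C}$ and $\langle b\rangle\in\mathfrak{C}$. *)

theory Defs
  imports "Graph_Theory.Arc_Walk" "HOL-Library.Sublist"
begin

text \<open>A cyclic string is a bi-infinite periodic word int => 'a considered up to
  shifting indices; we represent it as its shift-orbit, a set of bi-infinite words.
  cyc x is the cyclic string repeating the (nonempty) finite string x.\<close>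

type_synonym 'a cyclic = "(int \<Rightarrow> 'a) set"

definition cyc :: "'a list \<Rightarrow> 'a cyclic" where
  "cyc x = {w. \<exists>k::int. \<forall>i::int. w i = x ! nat ((i + k) mod int (length x))}"

definition substring_of :: "'a cyclic set \<Rightarrow> 'a list \<Rightarrow> bool" where
  "substring_of C s \<longleftrightarrow>
     (\<exists>c\<in>C. \<exists>w\<in>c. \<exists>k::int. \<forall>i<length s. w (k + int i) = s ! i)"

definition proper_infix :: "'a list \<Rightarrow> 'a list \<Rightarrow> bool" where
  "proper_infix u w \<longleftrightarrow> (\<exists>a b. a \<noteq> [] \<and> b \<noteq> [] \<and> w = a @ u @ b)"

definition conductor :: "'a cyclic set \<Rightarrow> 'a list \<Rightarrow> bool" where
  "conductor C v \<longleftrightarrow>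
     (\<forall>a b. a \<noteq> [] \<longrightarrow> b \<noteq> [] \<longrightarrow> (\<exists>a'. v @ a = a' @ v) \<longrightarrow> (\<exists>b'. v @ b = b' @ v) \<longrightarrow>
        (cyc (a @ b) \<in> C \<longleftrightarrow> cyc a \<in> C \<and> cyc b \<in> C))"

definition abstract_assembly_graph ::
  "('v, 'e) pre_digraph \<Rightarrow> ('v \<Rightarrow> 'a list) \<Rightarrow> ('e \<Rightarrow> 'a list) \<Rightarrow> bool" where
  "abstract_assembly_graph G lv le \<longleftrightarrow> fin_digraph G \<and>
     (\<forall>e\<in>arcs G. prefix (lv (tail G e)) (le e) \<and> suffix (lv (head G e)) (le e))"

definition prefix_edge :: "('v, 'e) pre_digraph \<Rightarrow> ('v \<Rightarrow> 'a list) \<Rightarrow> ('e \<Rightarrow> 'a list) \<Rightarrow> 'e \<Rightarrow> bool" where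
  "prefix_edge G lv le e \<longleftrightarrow> le e = lv (head G e)"

definition suffix_edge :: "('v, 'e) pre_digraph \<Rightarrow> ('v \<Rightarrow> 'a list) \<Rightarrow> ('e \<Rightarrow> 'a list) \<Rightarrow> 'e \<Rightarrow> bool" where
  "suffix_edge G lv le e \<longleftrightarrow> le e = lv (tail G e)"

definition assembly_graph ::
  "('v, 'e) pre_digraph \<Rightarrow> ('v \<Rightarrow> 'a list) \<Rightarrow> ('e \<Rightarrow> 'a list) \<Rightarrow> bool" where
  "assembly_graph G lv le \<longleftrightarrow> abstract_assembly_graph G lv le \<and>
     (\<forall>v\<in>verts G. \<exists>p. pre_digraph.cycle G p \<and> pre_digraph.awalk G v p v) \<and>
     (\<forall>e\<in>arcs G. \<exists>p. pre_digraph.cycle G p \<and> e \<in> set p) \<and>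
     (\<forall>e\<in>arcs G. \<not> (prefix_edge G lv le e \<and> suffix_edge G lv le e))"

definition walk_label ::
  "('v, 'e) pre_digraph \<Rightarrow> ('v \<Rightarrow> 'a list) \<Rightarrow> ('e \<Rightarrow> 'a list) \<Rightarrow> 'v \<Rightarrow> 'e list \<Rightarrow> 'a list" where
  "walk_label G lv le v0 p =
     (case p of [] \<Rightarrow> lv v0
      | e # es \<Rightarrow> le e @ concat (map (\<lambda>f. drop (length (lv (tail G f))) (le f)) es))"

definition primitive_walk :: "'e list \<Rightarrow> bool" where
  "primitive_walk p \<longleftrightarrow> \<not> (\<exists>q k. 2 \<le> k \<and> p = concat (replicate k q))"

text \<open>Circuit labels: for a primitive closed walk at v0 with at least one edge whose
  walk label is Label(v0) x, the circuit label is cyc x. (Rotating the closed walk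
  does not change the cyclic string, so this is the set of circuit labels.)\<close>

definition CPC ::
  "('v, 'e) pre_digraph \<Rightarrow> ('v \<Rightarrow> 'a list) \<Rightarrow> ('e \<Rightarrow> 'a list) \<Rightarrow> 'a cyclic set" where
  "CPC G lv le = {cyc x | x v0 p. pre_digraph.awalk G v0 p v0 \<and> p \<noteq> [] \<and> primitive_walk p
                              \<and> walk_label G lv le v0 p = lv v0 @ x}"

definition inner_subwalk ::
  "('v, 'e) pre_digraph \<Rightarrow> 'v \<Rightarrow> 'e list \<Rightarrow> 'v \<Rightarrow> 'e list \<Rightarrow> bool" where
  "inner_subwalk G u ps w qs \<longleftrightarrow>
     (\<exists>as bs. as \<noteq> [] \<and> bs \<noteq> [] \<and> qs = as @ ps @ bs \<and> pre_digraph.awalk G w as u)"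

definition non_redundant ::
  "('v, 'e) pre_digraph \<Rightarrow> ('v \<Rightarrow> 'a list) \<Rightarrow> ('e \<Rightarrow> 'a list) \<Rightarrow> bool" where
  "non_redundant G lv le \<longleftrightarrow>
     (\<forall>u ps u' w qs w'. pre_digraph.awalk G u ps u' \<longrightarrow> pre_digraph.awalk G w qs w' \<longrightarrow>
        proper_infix (walk_label G lv le u ps) (walk_label G lv le w qs) \<longrightarrow>
        inner_subwalk G u ps w qs)"

end

theory Submission
  imports Defs
begin

text \<open>
  The condition on a conductor v only involves strings a with v a = a' v.  Such an a makes v
  a factor of the periodic word a a a ..., which gives (iii), and passing to a superstring of
  v only restricts the admissible a, up to rotating a, which gives (i).

  The heart of the matter is a vertex label Label(x).  By non-redundancy, an occurrence of
  Label(x) strictly inside the label of a closed walk at x is always the position of a visit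
  of x: split the walk at an intermediate visit and recurse into the half containing the
  occurrence.  Hence the circuits \<langle>c\<rangle> with Label(x) c ending in Label(x) are exactly the
  extension labels c of closed walks at x, and such walks can be concatenated and split at
  will.  Edge and walk labels contain vertex labels, and so does every string that occurs in
  C and is at least as long as all edge labels, since it covers the overlap of two
  consecutive edge labels (iv).
\<close>

section \<open>Powers of lists and periodic factors\<close>

lemma length_concat_replicate [simp]: "length (concat (replicate m y)) = m * length y"
  by (induction m) auto

lemma concat_replicate_Suc_snoc: "concat (replicate (Suc n) c) = concat (replicate n c) @ c"
  by (induction n) auto

lemma concat_replicate_mult:
  "concat (replicate k (concat (replicate j r))) = concat (replicate (k * j) r)"
  by (induction k) (auto simp: replicate_add)

lemma primitive_root:
  assumes "p \<noteq> []"
  shows "\<exists>q k. primitive_walk q \<and> 0 < k \<and> p = concat (replicate k q)"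
  using assms
proof (induction "length p" arbitrary: p rule: less_induct)
  case less
  show ?case
  proof (cases "primitive_walk p")
    case True
    then show ?thesis
      by (intro exI[of _ p] exI[of _ 1]) simp
  next
    case False
    then obtain q k where q: "2 \<le> k" "p = concat (replicate k q)"
      unfolding primitive_walk_def by blast
    with less.prems have "q \<noteq> []" "length q < length p"
      by auto
    then obtain r j where r: "primitive_walk r" "0 < j" "q = concat (replicate j r)"
      using less.hyps by blast
    then have "p = concat (replicate (k * j) r)"
      using q by (simp add: concat_replicate_mult)
    moreover have "0 < k * j"
      using q r by simp
    ultimately show ?thesis
      using r(1) by blast
  qed
qed

lemma nth_concat_replicate:
  "i < m * length y \<Longrightarrow> concat (replicate m y) ! i = y ! (i mod length y)"
proof (induction m arbitrary: i)
  case (Suc m)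
  then show ?case
    by (cases "i < length y") (auto simp: nth_append le_mod_geq)
qed simp

lemma append_eq_append_longer:
  assumes "xs @ ys = zs @ ts" "length zs < length xs"
  shows "\<exists>us. us \<noteq> [] \<and> xs = zs @ us \<and> ts = us @ ys"
  using assms by (auto simp: append_eq_append_conv2)

lemma sublist_of_overlapping_occurrence:
  assumes "L = al @ s @ be" "L = al' @ t @ be'" "length al \<le> length al'"
    "length al' + length t \<le> length al + length s"
  shows "sublist t s"
proof -
  define k where "k = length al' - length al"
  have "t = take (length t) (drop (length al') L)"
    using assms(2) by simp
  also have "\<dots> = take (length t) (drop k s)"
    using assms(1,3,4) by (simp add: k_def drop_append take_append)
  finally show ?thesis
    by (metis sublist_order.order_trans sublist_take sublist_drop)
qed

definition periodic_factor :: "'a list \<Rightarrow> nat \<Rightarrow> 'a list \<Rightarrow> bool" where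
  "periodic_factor y r s \<longleftrightarrow> (\<forall>i<length s. s ! i = y ! ((r + i) mod length y))"

lemma periodic_factor_add_mult [simp]:
  "periodic_factor y (r + n * length y) s \<longleftrightarrow> periodic_factor y r s"
proof -
  have "r + n * length y + i = (r + i) + n * length y" for i
    by simp
  then show ?thesis
    by (simp only: periodic_factor_def mod_mult_self1)
qed

lemma periodic_factor_mod [simp]:
  "periodic_factor y (r mod length y) s \<longleftrightarrow> periodic_factor y r s"
  by (simp add: periodic_factor_def mod_add_left_eq)

lemma periodic_factor_appendD:
  "periodic_factor y r (s @ t) \<Longrightarrow> periodic_factor y r s"
  unfolding periodic_factor_def by (metis nth_append length_append trans_less_add1)

lemma periodic_factor_of_power:
  assumes "concat (replicate m y) = al @ s @ be"
  shows "periodic_factor y (length al) s"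
  unfolding periodic_factor_def
proof (intro allI impI)
  fix i assume "i < length s"
  moreover have "length al + length s \<le> m * length y"
    using arg_cong[OF assms, of length] by simp
  ultimately show "s ! i = y ! ((length al + i) mod length y)"
    using nth_concat_replicate[of "length al + i" m y] by (simp add: assms nth_append)
qed

lemma power_split_of_periodic_factor:
  assumes "periodic_factor y r s" "r + length s \<le> m * length y"
  shows "\<exists>al be. concat (replicate m y) = al @ s @ be \<and> length al = r"
proof -
  let ?Y = "concat (replicate m y)"
  have "take (length s) (drop r ?Y) = s"
    using assms by (intro nth_equalityI) (auto simp: periodic_factor_def nth_concat_replicate)
  then have "?Y = take r ?Y @ s @ drop (length s) (drop r ?Y)"
    by (metis append_take_drop_id)
  then show ?thesis
    using assms(2) by (intro exI conjI) (assumption, simp)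
qed

lemma periodic_factor_in_power:
  assumes "periodic_factor y r s" "y \<noteq> []"
  shows "\<exists>al be. concat (replicate (n + length s + 1) y) = al @ s @ be
    \<and> length al = r mod length y + n * length y \<and> be \<noteq> []"
proof -
  have "length s \<le> length s * length y"
    using assms(2) by (cases y) auto
  moreover have "r mod length y < length y"
    using assms(2) by simp
  moreover have "(n + length s + 1) * length y = n * length y + length s * length y + length y"
    by (simp add: algebra_simps)
  ultimately have bound: "r mod length y + n * length y + length s < (n + length s + 1) * length y"
    by linarith
  moreover have "periodic_factor y (r mod length y + n * length y) s"
    using assms(1) by simp
  ultimately obtain al be where
    split: "concat (replicate (n + length s + 1) y) = al @ s @ be" and
    al: "length al = r mod length y + n * length y"
    using power_split_of_periodic_factor less_imp_le by blast
  have "(n + length s + 1) * length y = length al + length s + length be"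
    using arg_cong[OF split, of length] by simp
  then have "be \<noteq> []"
    using bound al by auto
  then show ?thesis
    using split al by blast
qed

lemma suffix_self_append_power:
  assumes "suffix v (v @ c)"
  shows "suffix v (v @ concat (replicate n c))"
proof (induction n)
  case (Suc n)
  then obtain u where "v @ concat (replicate n c) = u @ v"
    by (auto simp: suffix_def)
  moreover obtain c' where "v @ c = c' @ v"
    using assms by (auto simp: suffix_def)
  ultimately have "v @ concat (replicate (Suc n) c) = u @ c' @ v"
    by (metis append.assoc concat_replicate_Suc_snoc)
  then show ?case by (simp add: suffix_def)
qed simp

lemma periodic_factor_of_suffix:
  assumes "c \<noteq> []" "suffix v (v @ c)"
  shows "\<exists>r. periodic_factor c r (v @ c)"
proof -
  let ?P = "concat (replicate (length v) c)"
  have "length v \<le> length ?P"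
    using assms(1) by (cases c) auto
  moreover have "suffix ?P (v @ ?P)"
    by (rule suffix_appendI) simp
  ultimately have "suffix v ?P"
    using suffix_self_append_power[OF assms(2)] by (metis suffix_length_suffix)
  then obtain u where "?P = u @ v"
    by (auto simp: suffix_def)
  then have "concat (replicate (Suc (length v)) c) = u @ (v @ c) @ []"
    by (simp only: concat_replicate_Suc_snoc) simp
  then show ?thesis
    using periodic_factor_of_power by metis
qed

section \<open>Cyclic strings\<close>

lemma cyc_eqI:
  assumes "x \<noteq> []" "y \<noteq> []"
    and shift: "\<And>j. x ! nat (j mod int (length x)) = y ! nat ((j + d) mod int (length y))"
  shows "cyc x = cyc y"
proof (intro equalityI subsetI)
  fix w assume "w \<in> cyc x"
  then obtain k where "\<forall>i. w i = x ! nat ((i + k) mod int (length x))"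
    unfolding cyc_def by blast
  then have "\<forall>i. w i = y ! nat ((i + (k + d)) mod int (length y))"
    by (simp add: shift add.assoc)
  then show "w \<in> cyc y"
    unfolding cyc_def by blast
next
  fix w assume "w \<in> cyc y"
  then obtain k where "\<forall>i. w i = y ! nat ((i + k) mod int (length y))"
    unfolding cyc_def by blast
  then have "\<forall>i. w i = x ! nat ((i + (k - d)) mod int (length x))"
    by (simp add: shift)
  then show "w \<in> cyc x"
    unfolding cyc_def by blast
qed

lemma cyc_rotate:
  assumes "x \<noteq> []"
  shows "cyc (rotate m x) = cyc x"
proof (rule cyc_eqI[where d = "int m"])
  fix j :: int
  let ?n = "int (length x)"
  have n: "?n > 0"
    using assms by simp
  have "int ((m + nat (j mod ?n)) mod length x) = (j + int m) mod ?n"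
    using n by (simp add: zmod_int mod_add_right_eq add.commute)
  then have "nat ((j + int m) mod ?n) = (m + nat (j mod ?n)) mod length x"
    by (metis nat_int)
  moreover have "nat (j mod ?n) < length x"
    using n by (simp add: nat_less_iff)
  ultimately show "rotate m x ! nat (j mod int (length (rotate m x))) =
      x ! nat ((j + int m) mod int (length x))"
    by (simp add: nth_rotate)
qed (use assms in simp_all)

lemma cyc_rotate_last: "cyc (ch # w) = cyc (w @ [ch])"
  using cyc_rotate[of "w @ [ch]" "length w"] by (simp add: rotate_append)

lemma cyc_power:
  assumes "x \<noteq> []" "0 < k"
  shows "cyc (concat (replicate k x)) = cyc x"
proof (rule cyc_eqI[where d = 0])
  fix j :: int
  let ?n = "int (length x)" and ?N = "int (k * length x)"
  have N: "?N > 0"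
    using assms by simp
  then have "nat (j mod ?N) < k * length x"
    by (simp add: nat_less_iff)
  moreover have "int (nat (j mod ?N) mod length x) = j mod ?n"
    using N by (simp add: zmod_int mod_mod_cancel)
  then have "nat (j mod ?n) = nat (j mod ?N) mod length x"
    by (metis nat_int)
  ultimately show "concat (replicate k x) ! nat (j mod int (length (concat (replicate k x)))) =
      x ! nat ((j + 0) mod int (length x))"
    by (simp add: nth_concat_replicate)
qed (use assms in \<open>simp_all add: gr0_conv_Suc\<close>)

lemma occurs_in_cyc_iff_periodic_factor:
  assumes "y \<noteq> []"
  shows "(\<exists>w\<in>cyc y. \<exists>k. \<forall>i<length s. w (k + int i) = s ! i) \<longleftrightarrow> (\<exists>r. periodic_factor y r s)"
proof
  let ?n = "int (length y)"
  assume "\<exists>w\<in>cyc y. \<exists>k. \<forall>i<length s. w (k + int i) = s ! i"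
  then obtain w k where w: "w \<in> cyc y" and k: "\<forall>i<length s. w (k + int i) = s ! i"
    by blast
  from w obtain k' where k': "\<forall>i. w i = y ! nat ((i + k') mod ?n)"
    unfolding cyc_def by blast
  define r where "r = nat ((k + k') mod ?n)"
  have "(k + int i + k') mod ?n = int ((r + i) mod length y)" for i
  proof -
    have "(k + int i + k') mod ?n = (int i + (k + k')) mod ?n"
      by (simp add: ac_simps)
    also have "\<dots> = (int i + (k + k') mod ?n) mod ?n"
      by (simp add: mod_add_right_eq)
    also have "\<dots> = int ((r + i) mod length y)"
      using assms by (simp add: r_def zmod_int add.commute)
    finally show ?thesis .
  qed
  then have "periodic_factor y r s"
    using k k' unfolding periodic_factor_def by (metis nat_int)
  then show "\<exists>r. periodic_factor y r s" ..
next
  assume "\<exists>r. periodic_factor y r s"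
  then obtain r where r: "periodic_factor y r s" ..
  let ?w = "\<lambda>i. y ! nat (i mod int (length y))"
  have "?w \<in> cyc y"
    unfolding cyc_def by (intro CollectI exI[of _ 0]) simp
  moreover have "(int r + int i) mod int (length y) = int ((r + i) mod length y)" for i
    by (simp only: zmod_int of_nat_add)
  then have "\<forall>i<length s. ?w (int r + int i) = s ! i"
    using r unfolding periodic_factor_def by (metis nat_int)
  ultimately show "\<exists>w\<in>cyc y. \<exists>k. \<forall>i<length s. w (k + int i) = s ! i"
    by (intro bexI[of _ ?w] exI[of _ "int r"])
qed

section \<open>Conductors\<close>

lemma conductor_iff_suffix:
  "conductor C v \<longleftrightarrow>
     (\<forall>a b. a \<noteq> [] \<longrightarrow> b \<noteq> [] \<longrightarrow> suffix v (v @ a) \<longrightarrow> suffix v (v @ b) \<longrightarrow>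
        (cyc (a @ b) \<in> C \<longleftrightarrow> cyc a \<in> C \<and> cyc b \<in> C))"
  unfolding conductor_def suffix_def by (metis (no_types, opaque_lifting))

lemma suffix_self_append_append:
  "suffix v (v @ a) \<Longrightarrow> suffix v (v @ b) \<Longrightarrow> suffix v (v @ a @ b)"
  unfolding suffix_def by (metis append.assoc)

lemma conductor_prepend:
  assumes "conductor C u"
  shows "conductor C (x @ u)"
proof -
  have "suffix u (u @ a)" if "suffix (x @ u) (x @ u @ a)" for a
  proof -
    have "suffix u (x @ u @ a)"
      using that suffix_appendD by blast
    moreover have "suffix (u @ a) (x @ u @ a)"
      by (rule suffix_appendI) simp
    ultimately show ?thesis
      using suffix_length_suffix by fastforce
  qed
  then show ?thesis
    using assms unfolding conductor_iff_suffix by (metis append.assoc)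
qed

lemma suffix_snoc_self_append:
  assumes "suffix (u @ [ch]) (u @ ch # a)" "a \<noteq> []"
  shows "a = butlast a @ [ch] \<and> suffix u (u @ ch # butlast a)"
proof -
  obtain a' where a': "u @ [ch] @ a = a' @ u @ [ch]"
    using assms(1) by (auto simp: suffix_def)
  then have "last a = ch"
    using assms(2) by (metis last_appendR last_snoc append.assoc)
  then have a: "a = butlast a @ [ch]"
    using assms(2) by (metis append_butlast_last_id)
  then have "u @ ch # butlast a = a' @ u"
    using a' by (metis append.assoc append_Cons append_Nil butlast_snoc)
  then show ?thesis
    using a by (simp add: suffix_def)
qed

lemma conductor_snoc:
  assumes "conductor C u"
  shows "conductor C (u @ [ch])"
  unfolding conductor_iff_suffix
proof (intro allI impI)
  fix a b :: "'a list"
  assume "a \<noteq> []" "b \<noteq> []"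
    and "suffix (u @ [ch]) ((u @ [ch]) @ a)" "suffix (u @ [ch]) ((u @ [ch]) @ b)"
  then have a: "a = butlast a @ [ch]" "suffix u (u @ ch # butlast a)"
    and b: "b = butlast b @ [ch]" "suffix u (u @ ch # butlast b)"
    using suffix_snoc_self_append[of u ch a] suffix_snoc_self_append[of u ch b] by simp_all
  \<comment> \<open>rotating the last character of a and b to the front makes them fit u\<close>
  have "cyc (ch # butlast a) = cyc a" "cyc (ch # butlast b) = cyc b"
    using a(1) b(1) cyc_rotate_last by metis+
  moreover have "cyc ((ch # butlast a) @ (ch # butlast b)) = cyc (a @ b)"
    using cyc_rotate_last[of ch "butlast a @ ch # butlast b"] a(1) b(1)
    by (metis append.assoc append_Cons append_Nil)
  ultimately show "cyc (a @ b) \<in> C \<longleftrightarrow> cyc a \<in> C \<and> cyc b \<in> C"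
    using assms a(2) b(2) unfolding conductor_iff_suffix by (metis list.discI)
qed

lemma conductor_append:
  "conductor C u \<Longrightarrow> conductor C (u @ y)"
proof (induction y rule: rev_induct)
  case (snoc ch y)
  then show ?case
    using conductor_snoc[of C "u @ y" ch] by simp
qed simp

lemma conductor_sublist:
  assumes "conductor C u" "sublist u s"
  shows "conductor C s"
  using assms conductor_prepend conductor_append unfolding sublist_def by blast

lemma substring_of_cyc_suffix:
  assumes "a \<noteq> []" "suffix s (s @ a)" "cyc a \<in> C"
  shows "substring_of C s"
proof -
  obtain r where "periodic_factor a r (s @ a)"
    using periodic_factor_of_suffix[OF assms(1,2)] ..
  then have "periodic_factor a r s"
    by (rule periodic_factor_appendD)
  then show ?thesis
    using occurs_in_cyc_iff_periodic_factor[OF assms(1)] assms(3) unfolding substring_of_def by blast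
qed

lemma conductor_if_not_substring:
  assumes "\<not> substring_of C s"
  shows "conductor C s"
  unfolding conductor_iff_suffix
proof (intro allI impI)
  fix a b :: "'a list"
  assume "a \<noteq> []" "b \<noteq> []" "suffix s (s @ a)" "suffix s (s @ b)"
  then have "cyc a \<notin> C" "cyc b \<notin> C" "cyc (a @ b) \<notin> C"
    using assms substring_of_cyc_suffix[of _ s C] suffix_self_append_append by blast+
  then show "cyc (a @ b) \<in> C \<longleftrightarrow> cyc a \<in> C \<and> cyc b \<in> C"
    by blast
qed

section \<open>Labels of walks\<close>

locale abstract_assembly =
  fixes G :: "('v, 'e) pre_digraph" and lv :: "'v \<Rightarrow> 'a list" and le :: "'e \<Rightarrow> 'a list"
  assumes abstract_assembly_graph: "abstract_assembly_graph G lv le"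
begin

sublocale fin_digraph G
  using abstract_assembly_graph unfolding abstract_assembly_graph_def by blast

definition arc_ext :: "'e \<Rightarrow> 'a list" where
  "arc_ext e = drop (length (lv (tail G e))) (le e)"

definition walk_ext :: "'e list \<Rightarrow> 'a list" where
  "walk_ext p = concat (map arc_ext p)"

lemma walk_ext_Nil [simp]: "walk_ext [] = []"
  and walk_ext_Cons [simp]: "walk_ext (e # p) = arc_ext e @ walk_ext p"
  and walk_ext_append [simp]: "walk_ext (p @ q) = walk_ext p @ walk_ext q"
  by (simp_all add: walk_ext_def)

lemma walk_ext_power: "walk_ext (concat (replicate k p)) = concat (replicate k (walk_ext p))"
  by (induction k) auto

lemma arc_label_eq: "e \<in> arcs G \<Longrightarrow> le e = lv (tail G e) @ arc_ext e"
  using abstract_assembly_graph unfolding abstract_assembly_graph_def arc_ext_def prefix_def by auto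

lemma suffix_head_label: "e \<in> arcs G \<Longrightarrow> suffix (lv (head G e)) (le e)"
  using abstract_assembly_graph unfolding abstract_assembly_graph_def by auto

lemma walk_label_eq:
  assumes "awalk u p w"
  shows "walk_label G lv le u p = lv u @ walk_ext p"
proof (cases p)
  case (Cons e es)
  then have "e \<in> arcs G" "tail G e = u"
    using assms by (auto simp: awalk_Cons_iff)
  then show ?thesis
    using arc_label_eq[of e] by (simp add: Cons walk_label_def walk_ext_def arc_ext_def[abs_def])
qed (simp add: walk_label_def)

lemma suffix_walk_label: "awalk u p w \<Longrightarrow> suffix (lv w) (lv u @ walk_ext p)"
proof (induction p arbitrary: u)
  case (Cons e p)
  then have e: "e \<in> arcs G" "tail G e = u" "awalk (head G e) p w"
    by (auto simp: awalk_Cons_iff)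
  obtain q where q: "lv (head G e) @ walk_ext p = q @ lv w"
    using Cons.IH[OF e(3)] by (auto simp: suffix_def)
  obtain pre where pre: "le e = pre @ lv (head G e)"
    using suffix_head_label[OF e(1)] by (auto simp: suffix_def)
  have "lv u @ walk_ext (e # p) = le e @ walk_ext p"
    using arc_label_eq[OF e(1)] e(2) by simp
  also have "\<dots> = (pre @ q) @ lv w"
    using pre q by simp
  finally show ?case
    by (simp only: suffix_def) blast
qed (simp add: awalk_Nil_iff)

lemma awalk_power: "awalk z p z \<Longrightarrow> awalk z (concat (replicate k p)) z"
  by (induction k) (auto simp: awalk_Nil_iff awalk_hd_in_verts)

lemma awalk_of_power:
  assumes "awalk z (concat (replicate k p)) z" "0 < k" "p \<noteq> []"
  shows "awalk z p z"
proof -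
  obtain k' where k: "k = Suc k'"
    using assms(2) gr0_conv_Suc by blast
  have "awalk z (p @ concat (replicate k' p)) z" "awalk z (concat (replicate k' p) @ p) z"
    using assms(1) by (simp_all add: k flip: concat_replicate_Suc_snoc)
  then obtain m m' where "awalk z p m" "awalk m' p z"
    unfolding awalk_append_iff by blast
  then show ?thesis
    using awalk_ends[of z p m m' z] assms(3) by auto
qed

lemma vertex_label_sublist_of_long_infix:
  "awalk u p w \<Longrightarrow> p \<noteq> [] \<Longrightarrow> lv u @ walk_ext p = al @ s @ be \<Longrightarrow>
    \<forall>e\<in>set p. length (le e) \<le> length s \<Longrightarrow> \<exists>y\<in>verts G. sublist (lv y) s"
proof (induction p arbitrary: u al)
  case (Cons e p)
  then have e: "e \<in> arcs G" "tail G e = u" "awalk (head G e) p w" "length (le e) \<le> length s"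
    by (auto simp: awalk_Cons_iff)
  obtain pre where pre: "le e = pre @ lv (head G e)"
    using suffix_head_label[OF e(1)] by (auto simp: suffix_def)
  have L: "lv u @ walk_ext (e # p) = pre @ lv (head G e) @ walk_ext p"
    using arc_label_eq[OF e(1)] e(2) pre by simp
  show ?case
  proof (cases "length al \<le> length pre")
    case True
    \<comment> \<open>s starts within the first arc label and is at least as long, so it covers lv (head G e)\<close>
    moreover have "length pre + length (lv (head G e)) \<le> length al + length s"
      using e(4) arg_cong[OF pre, of length] by simp
    ultimately have "sublist (lv (head G e)) s"
      by (rule sublist_of_overlapping_occurrence[OF Cons.prems(3) L])
    then show ?thesis
      using head_in_verts[OF e(1)] by blast
  next
    case False
    then obtain al' where al': "lv (head G e) @ walk_ext p = al' @ s @ be" "al' \<noteq> []"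
      using append_eq_append_longer[of al "s @ be" pre "lv (head G e) @ walk_ext p"] Cons.prems(3) L
      by auto
    show ?thesis
    proof (cases "p = []")
      case True
      then show ?thesis
        using arg_cong[OF al'(1), of length] al'(2) e(4) pre by auto
    next
      case False
      then show ?thesis
        using Cons.IH[OF e(3) False al'(1)] Cons.prems(4) by simp
    qed
  qed
qed simp

end

locale assembly = abstract_assembly +
  assumes no_prefix_suffix_arc: "e \<in> arcs G \<Longrightarrow> \<not> (prefix_edge G lv le e \<and> suffix_edge G lv le e)"
begin

lemma walk_ext_closed_nonempty:
  assumes "awalk z p z" "p \<noteq> []"
  shows "walk_ext p \<noteq> []"
proof
  assume ext: "walk_ext p = []"
  obtain e es where p: "p = e # es"
    using assms(2) by (cases p) auto
  then have e: "e \<in> arcs G" "tail G e = z" "awalk (head G e) es z"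
    using assms(1) by (auto simp: awalk_Cons_iff)
  have "le e = lv z"
    using arc_label_eq[OF e(1)] e(2) ext p by simp
  moreover have "suffix (lv z) (lv (head G e))"
    using suffix_walk_label[OF e(3)] ext p by simp
  moreover have "suffix (lv (head G e)) (le e)"
    using suffix_head_label[OF e(1)] .
  ultimately have "le e = lv (head G e) \<and> le e = lv (tail G e)"
    using e(2) suffix_order.antisym by metis
  then show False
    using no_prefix_suffix_arc[OF e(1)] unfolding prefix_edge_def suffix_edge_def by blast
qed

lemma CPC_eq: "CPC G lv le = {cyc (walk_ext p) |z p. awalk z p z \<and> p \<noteq> []}"
proof (intro equalityI subsetI)
  fix c assume "c \<in> CPC G lv le"
  then obtain x z p where "c = cyc x" "awalk z p z" "p \<noteq> []" "walk_label G lv le z p = lv z @ x"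
    unfolding CPC_def by blast
  moreover from this have "x = walk_ext p"
    using walk_label_eq by simp
  ultimately show "c \<in> {cyc (walk_ext p) |z p. awalk z p z \<and> p \<noteq> []}"
    by blast
next
  fix c assume "c \<in> {cyc (walk_ext p) |z p. awalk z p z \<and> p \<noteq> []}"
  then obtain z p where p: "awalk z p z" "p \<noteq> []" and c: "c = cyc (walk_ext p)"
    by blast
  obtain q k where q: "primitive_walk q" "0 < k" "p = concat (replicate k q)"
    using primitive_root[OF p(2)] by blast
  then have "q \<noteq> []" "awalk z q z"
    using p awalk_of_power by auto
  moreover have "c = cyc (walk_ext q)"
    using c q walk_ext_closed_nonempty[OF \<open>awalk z q z\<close> \<open>q \<noteq> []\<close>]
    by (simp add: walk_ext_power cyc_power)
  ultimately show "c \<in> CPC G lv le"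
    unfolding CPC_def using q(1) walk_label_eq by blast
qed

end

section \<open>Non-redundant assembly graphs\<close>

locale non_redundant_assembly = assembly +
  assumes non_redundant: "non_redundant G lv le"
begin

lemma visit_of_label_infix:
  assumes Q: "awalk z Q w" and x: "x \<in> verts G"
    and occ: "lv z @ walk_ext Q = al @ lv x @ be" "al \<noteq> []" "be \<noteq> []"
  shows "\<exists>Q1 Q2. Q = Q1 @ Q2 \<and> Q1 \<noteq> [] \<and> Q2 \<noteq> [] \<and> awalk z Q1 x"
proof -
  have "proper_infix (walk_label G lv le x []) (walk_label G lv le z Q)"
    using occ walk_label_eq[OF Q] unfolding proper_infix_def walk_label_def by auto
  moreover have "awalk x [] x"
    using x by (simp add: awalk_Nil_iff)
  ultimately have "inner_subwalk G x [] z Q"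
    using non_redundant Q unfolding non_redundant_def by blast
  then show ?thesis
    unfolding inner_subwalk_def by auto
qed

lemma closed_walk_split_at_occurrence:
  assumes "awalk x S x" "lv x @ walk_ext S = al @ lv x @ be" "al \<noteq> []" "be \<noteq> []"
  shows "\<exists>S1 S2. S = S1 @ S2 \<and> awalk x S1 x \<and> awalk x S2 x \<and> lv x @ walk_ext S1 = al @ lv x"
  using assms
proof (induction "length S" arbitrary: S al be rule: less_induct)
  case less
  then have "x \<in> verts G"
    by (blast intro: awalk_hd_in_verts)
  then obtain P Q where S: "S = P @ Q" "P \<noteq> []" "Q \<noteq> []" and P: "awalk x P x"
    using visit_of_label_infix[OF less.prems(1) _ less.prems(2-4)] by blast
  then have Q: "awalk x Q x"
    using less.prems(1) by simp
  have L: "(lv x @ walk_ext P) @ walk_ext Q = al @ lv x @ be"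
    using less.prems(2) S(1) by simp
  consider (exact) "length (walk_ext P) = length al"
    | (in_first) "length al < length (walk_ext P)"
    | (in_second) "length (walk_ext P) < length al"
    by linarith
  then show ?case
  proof cases
    case exact
    then have "lv x @ walk_ext P = al @ lv x"
      using L append_eq_append_conv[of "lv x @ walk_ext P" "al @ lv x"] by simp
    then show ?thesis
      using S P Q by blast
  next
    case in_first
    then obtain be' where "be' \<noteq> []" "lv x @ walk_ext P = al @ lv x @ be'"
      using append_eq_append_longer[of "lv x @ walk_ext P" _ "al @ lv x"] L by auto
    moreover have "length P < length S"
      using S by simp
    ultimately obtain S1 S2 where
      "P = S1 @ S2" "awalk x S1 x" "awalk x S2 x" "lv x @ walk_ext S1 = al @ lv x"
      using less.hyps P \<open>al \<noteq> []\<close> by blast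
    moreover have "awalk x (S2 @ Q) x"
      using awalk_appendI[OF \<open>awalk x S2 x\<close> Q] .
    ultimately show ?thesis
      using S(1) by (metis append.assoc)
  next
    case in_second
    obtain pre where pre: "lv x @ walk_ext P = pre @ lv x"
      using suffix_walk_label[OF P] by (auto simp: suffix_def)
    moreover have "length pre = length (walk_ext P)"
      using arg_cong[OF pre, of length] by simp
    ultimately have "al @ lv x @ be = pre @ lv x @ walk_ext Q" "length pre < length al"
      using L in_second by simp_all
    then obtain al' where al': "al' \<noteq> []" "al = pre @ al'" "lv x @ walk_ext Q = al' @ lv x @ be"
      using append_eq_append_longer[of al] by blast
    moreover have "length Q < length S"
      using S by simp
    ultimately obtain T1 T2 where
      "Q = T1 @ T2" "awalk x T1 x" "awalk x T2 x" "lv x @ walk_ext T1 = al' @ lv x"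
      using less.hyps Q \<open>be \<noteq> []\<close> by blast
    moreover have "awalk x (P @ T1) x"
      using awalk_appendI[OF P \<open>awalk x T1 x\<close>] .
    moreover have "lv x @ walk_ext (P @ T1) = al @ lv x"
      using pre al'(2) \<open>lv x @ walk_ext T1 = al' @ lv x\<close> by (metis append.assoc walk_ext_append)
    ultimately show ?thesis
      using S(1) by (metis append.assoc)
  qed
qed

lemma closed_walk_of_periodic_occurrence:
  assumes S: "awalk x S x" and occ: "lv x @ walk_ext S = al @ lv x @ c @ be"
    and ne: "al \<noteq> []" "c \<noteq> []" "be \<noteq> []" and per: "suffix (lv x) (lv x @ c)"
  shows "\<exists>A. awalk x A x \<and> walk_ext A = c"
proof -
  obtain c' where c': "lv x @ c = c' @ lv x"
    using per by (auto simp: suffix_def)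
  obtain S1 S2 where S1: "S = S1 @ S2" "awalk x S1 x" "lv x @ walk_ext S1 = al @ lv x"
    using closed_walk_split_at_occurrence[OF S occ] ne by blast
  have "lv x @ walk_ext S = (al @ c') @ lv x @ be"
    using occ c' by simp
  then obtain T1 T2 where T1: "S = T1 @ T2" "awalk x T1 x" "lv x @ walk_ext T1 = (al @ c') @ lv x"
    using closed_walk_split_at_occurrence[OF S] ne by blast
  then have T1_label: "lv x @ walk_ext T1 = al @ lv x @ c"
    using c' by simp
  have "length (walk_ext S1) < length (walk_ext T1)"
    using arg_cong[OF S1(3), of length] arg_cong[OF T1_label, of length] ne(2) by simp
  then obtain A where A: "T1 = S1 @ A"
    using S1(1) T1(1) by (auto simp: append_eq_append_conv2)
  then have "awalk x A x"
    using T1(2) S1(2) by simp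
  moreover have "(al @ lv x) @ walk_ext A = (al @ lv x) @ c"
    using T1_label S1(3) A by (metis append.assoc walk_ext_append)
  then have "walk_ext A = c"
    by (rule same_append_eq[THEN iffD1])
  ultimately show ?thesis
    by blast
qed

lemma power_visit_of_periodic_factor:
  assumes Z: "awalk z Z z" "Z \<noteq> []" and x: "x \<in> verts G"
    and factor: "periodic_factor (walk_ext Z) r (lv x)" and "0 < n"
  shows "\<exists>P R. concat (replicate (n + length (lv x) + 1) Z) = P @ R \<and> awalk z P x \<and> awalk x R z"
proof -
  let ?Zn = "concat (replicate (n + length (lv x) + 1) Z)"
  have y: "walk_ext Z \<noteq> []"
    using walk_ext_closed_nonempty[OF Z] .
  then obtain al be where "concat (replicate (n + length (lv x) + 1) (walk_ext Z)) = al @ lv x @ be"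
    and al: "length al = r mod length (walk_ext Z) + n * length (walk_ext Z)" and "be \<noteq> []"
    using periodic_factor_in_power[OF factor] by blast
  moreover have "al \<noteq> []"
    using al y \<open>0 < n\<close> by auto
  moreover have "awalk z ?Zn z"
    using awalk_power[OF Z(1)] .
  ultimately obtain P R where "?Zn = P @ R" "awalk z P x"
    using visit_of_label_infix[of z ?Zn z x "lv z @ al" be] x by (auto simp: walk_ext_power)
  moreover from this have "awalk x R z"
    using \<open>awalk z ?Zn z\<close> by simp
  ultimately show ?thesis
    by blast
qed

lemma closed_walk_of_periodic_factor:
  assumes Z: "awalk z Z z" "Z \<noteq> []" and x: "x \<in> verts G"
    and c: "c \<noteq> []" "suffix (lv x) (lv x @ c)"
    and factor: "periodic_factor (walk_ext Z) r (lv x @ c)"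
  shows "\<exists>A. awalk x A x \<and> walk_ext A = c"
proof -
  define y where "y = walk_ext Z"
  define N where "N = length (lv x @ c) + 2"
  have y: "y \<noteq> []"
    using walk_ext_closed_nonempty[OF Z] by (simp add: y_def)
  have ZN: "awalk z (concat (replicate N Z)) z"
    using awalk_power[OF Z(1)] .
  have "N = (length c + 1) + length (lv x) + 1"
    by (simp add: N_def)
  then obtain P R where PR: "concat (replicate N Z) = P @ R" and P: "awalk z P x" and R: "awalk x R z"
    using power_visit_of_periodic_factor[OF Z x periodic_factor_appendD[OF factor], of "length c + 1"]
    by auto
  \<comment> \<open>going once more around Z^N moves the occurrence of lv x @ c away from both ends\<close>
  define S where "S = R @ concat (replicate N Z) @ P"
  have S: "awalk x S x"
    unfolding S_def using R ZN P by (blast intro: awalk_appendI)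
  obtain pre where pre: "lv z @ walk_ext P = pre @ lv x"
    using suffix_walk_label[OF P] by (auto simp: suffix_def)
  have ext_PR: "walk_ext P @ walk_ext R = concat (replicate N y)"
    using PR by (metis walk_ext_append walk_ext_power y_def)
  have "pre @ lv x @ walk_ext S = (lv z @ walk_ext P) @ walk_ext R @ concat (replicate N y) @ walk_ext P"
    using pre by (simp add: S_def walk_ext_power y_def)
  also have "\<dots> = lv z @ (walk_ext P @ walk_ext R) @ concat (replicate N y) @ walk_ext P"
    by simp
  also have "\<dots> = lv z @ concat (replicate (N + N) y) @ walk_ext P"
    by (simp only: ext_PR replicate_add concat_append append.assoc)
  finally have "pre @ lv x @ walk_ext S = lv z @ concat (replicate (N + N) y) @ walk_ext P" .
  moreover obtain al2 be2 where occ: "concat (replicate (N + N) y) = al2 @ (lv x @ c) @ be2"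
    "length al2 = r mod length y + (N + 1) * length y" "be2 \<noteq> []"
    using periodic_factor_in_power[OF factor[folded y_def] y, of "N + 1"] by (auto simp: N_def)
  ultimately have L: "pre @ (lv x @ walk_ext S) = (lv z @ al2) @ (lv x @ c @ be2 @ walk_ext P)"
    by simp
  have "length pre \<le> length (lv z) + N * length y"
    using arg_cong[OF pre, of length] arg_cong[OF ext_PR, of length] by simp
  moreover have "N * length y < length al2"
    using occ(2) y by simp
  ultimately obtain al where "al \<noteq> []" "lv x @ walk_ext S = al @ lv x @ c @ be2 @ walk_ext P"
    using append_eq_append_longer[OF L[symmetric]] by auto
  then show ?thesis
    using closed_walk_of_periodic_occurrence[OF S _ _ c(1) _ c(2)] occ(3) by blast
qed

lemma closed_walk_in_CPC: "awalk z p z \<Longrightarrow> p \<noteq> [] \<Longrightarrow> cyc (walk_ext p) \<in> CPC G lv le"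
  unfolding CPC_eq by blast

lemma closed_walk_of_CPC:
  assumes "x \<in> verts G" "c \<noteq> []" "suffix (lv x) (lv x @ c)" "cyc c \<in> CPC G lv le"
  shows "\<exists>A. awalk x A x \<and> walk_ext A = c"
proof -
  obtain z Z where Z: "awalk z Z z" "Z \<noteq> []" and cyc_eq: "cyc c = cyc (walk_ext Z)"
    using assms(4) unfolding CPC_eq by blast
  obtain r where "periodic_factor c r (lv x @ c)"
    using periodic_factor_of_suffix[OF assms(2,3)] ..
  then obtain r' where "periodic_factor (walk_ext Z) r' (lv x @ c)"
    using occurs_in_cyc_iff_periodic_factor[OF assms(2)] cyc_eq
      occurs_in_cyc_iff_periodic_factor[OF walk_ext_closed_nonempty[OF Z]] by metis
  then show ?thesis
    using closed_walk_of_periodic_factor[OF Z assms(1-3)] by blast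
qed

lemma conductor_vertex_label:
  assumes x: "x \<in> verts G"
  shows "conductor (CPC G lv le) (lv x)"
  unfolding conductor_iff_suffix
proof (intro allI impI)
  fix a b
  assume a: "a \<noteq> []" and b: "b \<noteq> []"
    and per_a: "suffix (lv x) (lv x @ a)" and per_b: "suffix (lv x) (lv x @ b)"
  show "cyc (a @ b) \<in> CPC G lv le \<longleftrightarrow> cyc a \<in> CPC G lv le \<and> cyc b \<in> CPC G lv le"
  proof
    assume "cyc (a @ b) \<in> CPC G lv le"
    then obtain W where W: "awalk x W x" "walk_ext W = a @ b"
      using closed_walk_of_CPC[OF x _ suffix_self_append_append[OF per_a per_b]] a by blast
    obtain a' where a': "lv x @ a = a' @ lv x"
      using per_a by (auto simp: suffix_def)
    then have "a' \<noteq> []"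
      using a arg_cong[OF a', of length] by auto
    moreover have "lv x @ walk_ext W = a' @ lv x @ b"
      using W(2) a' by simp
    ultimately obtain S1 S2 where
      S: "W = S1 @ S2" "awalk x S1 x" "awalk x S2 x" "lv x @ walk_ext S1 = a' @ lv x"
      using closed_walk_split_at_occurrence[OF W(1)] b by blast
    then have "walk_ext S1 = a"
      using a' by (metis same_append_eq)
    moreover from this have "walk_ext S2 = b"
      using S(1) W(2) by simp
    ultimately show "cyc a \<in> CPC G lv le \<and> cyc b \<in> CPC G lv le"
      using closed_walk_in_CPC[OF S(2)] closed_walk_in_CPC[OF S(3)] a b by (metis walk_ext_Nil)
  next
    assume "cyc a \<in> CPC G lv le \<and> cyc b \<in> CPC G lv le"
    then obtain A B where "awalk x A x" "walk_ext A = a" "awalk x B x" "walk_ext B = b"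
      using closed_walk_of_CPC[OF x a per_a] closed_walk_of_CPC[OF x b per_b] by blast
    then have "awalk x (A @ B) x" "A @ B \<noteq> []" "walk_ext (A @ B) = a @ b"
      using a by (auto intro: awalk_appendI)
    then show "cyc (a @ b) \<in> CPC G lv le"
      using closed_walk_in_CPC by metis
  qed
qed

lemma conductor_if_long:
  assumes long: "\<forall>e\<in>arcs G. length (le e) \<le> length s"
  shows "conductor (CPC G lv le) s"
proof (cases "substring_of (CPC G lv le) s")
  case True
  then obtain z Z w k where Z: "awalk z Z z" "Z \<noteq> []"
    and w: "w \<in> cyc (walk_ext Z)" "\<forall>i<length s. w (k + int i) = s ! i"
    unfolding substring_of_def CPC_eq by blast
  then obtain r where "periodic_factor (walk_ext Z) r s"
    using occurs_in_cyc_iff_periodic_factor[OF walk_ext_closed_nonempty[OF Z]] by blast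
  then obtain al be where "concat (replicate (length s + 1) (walk_ext Z)) = al @ s @ be"
    using periodic_factor_in_power[of "walk_ext Z" r s 0] walk_ext_closed_nonempty[OF Z] by auto
  moreover define ZN where "ZN = concat (replicate (length s + 1) Z)"
  ultimately have "lv z @ walk_ext ZN = (lv z @ al) @ s @ be"
    by (simp add: walk_ext_power)
  moreover have "awalk z ZN z"
    unfolding ZN_def by (rule awalk_power[OF Z(1)])
  moreover have "ZN \<noteq> []"
    using Z(2) by (simp add: ZN_def)
  moreover have "\<forall>e\<in>set ZN. length (le e) \<le> length s"
    using \<open>awalk z ZN z\<close> long by (auto simp: awalk_def)
  ultimately obtain y where "y \<in> verts G" "sublist (lv y) s"
    using vertex_label_sublist_of_long_infix by blast
  then show ?thesis
    using conductor_vertex_label conductor_sublist by blast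
qed (rule conductor_if_not_substring)

end

theorem theorem5:
  fixes G :: "('v, 'e) pre_digraph"
    and lv :: "'v \<Rightarrow> 'a::finite list"
    and le :: "'e \<Rightarrow> 'a list"
    and C :: "'a cyclic set"
  assumes "assembly_graph G lv le"
    and "non_redundant G lv le"
    and "C = CPC G lv le"
  shows "(\<forall>u s. conductor C u \<and> sublist u s \<longrightarrow> conductor C s)
       \<and> (\<forall>v\<in>verts G. conductor C (lv v))
       \<and> (\<forall>e\<in>arcs G. conductor C (le e))
       \<and> (\<forall>u p u'. pre_digraph.awalk G u p u' \<longrightarrow> conductor C (walk_label G lv le u p))
       \<and> (\<forall>s. \<not> substring_of C s \<longrightarrow> conductor C s)
       \<and> (\<forall>s. (\<forall>e\<in>arcs G. length (le e) \<le> length s) \<longrightarrow> conductor C s)"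
proof -
  interpret non_redundant_assembly G lv le
    using assms(1,2) by unfold_locales (auto simp: assembly_graph_def)
  have vertex: "\<forall>v\<in>verts G. conductor C (lv v)"
    using conductor_vertex_label assms(3) by blast
  show ?thesis
  proof (intro conjI allI impI ballI)
    fix e assume "e \<in> arcs G"
    then show "conductor C (le e)"
      using vertex conductor_sublist arc_label_eq by (metis tail_in_verts sublist_append_rightI)
  next
    fix u p u' assume "awalk u p u'"
    then show "conductor C (walk_label G lv le u p)"
      using vertex conductor_sublist walk_label_eq by (metis awalk_hd_in_verts sublist_append_rightI)
  qed (use vertex assms(3) conductor_sublist conductor_if_not_substring conductor_if_long in auto)
qed

end
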